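(* Let $A\in\mathbb{R}^{n\times n}$ be symmetric with smallest eigenvalue $\alpha_n$, $g\in\mathbb{R}^n$ nonzero, $\Delta>0$, and let $x_{opt}$ be a global minimizer of $\frac12x^TAx+x^Tg$ subject to $\|x\|\le\Delta$ with Lagrange multiplier $\lambda_{opt}\ge0$ (i.e. $(A+\lambda_{opt}I)x_{opt}=-g$, $\lambda_{opt}(\Delta-\|x_{opt}\|)=0$, $A+\lambda_{opt}I\succeq0$). Suppose $\|x_{opt}\|=\Delta$. Let $$M=\begin{pmatrix}-A&\frac{gg^T}{\Delta^2}\\ I&-A\end{pmatrix}\in\mathbb{R}^{2n\times2n}.$$ Then the TRS is in the easy case, i.e. $\lambda_{opt}>-\alpha_n$, if and only if $\lambda_{opt}$ is a simple eigenvalue of $M$.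
   Context: Norms are Euclidean. By standard theory either $\lambda_{opt}>-\alpha_n$ (easy case) or $\lambda_{opt}=-\alpha_n$ (hard case, in which $g\perp\mathcal{N}(A-\alpha_nI)$). *)

theory Defs
  imports "Jordan_Normal_Form.Jordan_Normal_Form"
begin

definition vnorm :: "real vec \<Rightarrow> real" where
  "vnorm v = sqrt (v \<bullet> v)"

definition trs_obj :: "real mat \<Rightarrow> real vec \<Rightarrow> real vec \<Rightarrow> real" where
  "trs_obj A g x = (1/2) * (x \<bullet> (A *\<^sub>v x)) + x \<bullet> g"

definition psd :: "nat \<Rightarrow> real mat \<Rightarrow> bool" where
  "psd n B \<longleftrightarrow> (\<forall>v \<in> carrier_vec n. 0 \<le> v \<bullet> (B *\<^sub>v v))"

definition outer :: "nat \<Rightarrow> real vec \<Rightarrow> real mat" where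
  "outer n g = mat n n (\<lambda>(i, j). g $ i * g $ j)"

definition Mmat :: "nat \<Rightarrow> real mat \<Rightarrow> real vec \<Rightarrow> real \<Rightarrow> real mat" where
  "Mmat n A g \<Delta> = four_block_mat (- A) ((1 / \<Delta>\<^sup>2) \<cdot>\<^sub>m outer n g) (1\<^sub>m n) (- A)"

definition simple_eigenvalue :: "real mat \<Rightarrow> real \<Rightarrow> bool" where
  "simple_eigenvalue M l \<longleftrightarrow> eigenvalue M l \<and> order l (char_poly M) = 1"

end

theory Submission
  imports Defs
begin

(* Let t be the indeterminate of the characteristic polynomial, and write B = A + lam I,
s = t - lam and G = g g^T / Delta^2. The lower-left block of M is the identity, which commutes
with the diagonal blocks, so the characteristic polynomial of M is det((A + t I)^2 - G).

In the hard case an eigenvector k of A for -lam satisfies g^T k = -x^T B k = 0, so k is an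
eigenvector of (A + t I)^2 - G for s^2, and s^2 divides the characteristic polynomial.

In the easy case B is positive definite with inverse E. From g = -B x we get
G = B x x^T B / Delta^2, and A + t I = B (I + s E) = (I + s E) B, so the characteristic polynomial equals
det(B)^2 det((I + s E)^2 - x x^T / Delta^2). Since (I + s E)^2 x = x + s r for a polynomial
vector r and x^T x = Delta^2, the matrix determinant lemma splits off exactly one factor s from
the second determinant; the cofactor takes the value 2 x^T E x / Delta^2 > 0 at t = lam. *)

abbreviation const_mat :: "'a::zero mat \<Rightarrow> 'a poly mat" where
  "const_mat \<equiv> map_mat (\<lambda>a. [:a:])"

abbreviation const_vec :: "'a::zero vec \<Rightarrow> 'a poly vec" where
  "const_vec \<equiv> map_vec (\<lambda>a. [:a:])"

interpretation const_poly: comm_ring_hom "\<lambda>a::'a::comm_ring_1. [:a:]"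
  by unfold_locales (auto simp: one_pCons)

lemma smult_mat_mult_vec:
  fixes B :: "'a::comm_ring_1 mat"
  assumes "B \<in> carrier_mat n m" and "v \<in> carrier_vec m"
  shows "(a \<cdot>\<^sub>m B) *\<^sub>v v = a \<cdot>\<^sub>v (B *\<^sub>v v)"
  by (rule eq_vecI) (use assms in \<open>auto simp: scalar_prod_def sum_distrib_left ac_simps\<close>)

lemma mult_mat_vec_smult:
  fixes B :: "'a::comm_ring_1 mat"
  assumes "B \<in> carrier_mat n m" and "v \<in> carrier_vec m"
  shows "B *\<^sub>v (a \<cdot>\<^sub>v v) = a \<cdot>\<^sub>v (B *\<^sub>v v)"
  by (rule eq_vecI) (use assms in \<open>auto simp: scalar_prod_def sum_distrib_left ac_simps\<close>)

lemma symmetric_mat_scalar_prod: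
  fixes B :: "'a::comm_semiring_0 mat"
  assumes "B \<in> carrier_mat n n" and "B\<^sup>T = B" and "x \<in> carrier_vec n" and "y \<in> carrier_vec n"
  shows "(B *\<^sub>v y) \<bullet> x = y \<bullet> (B *\<^sub>v x)"
  using transpose_vec_mult_scalar[OF assms(1,3,4)] assms(2) by simp

lemma transpose_add_smult_one:
  assumes "A \<in> carrier_mat n n" and "A\<^sup>T = A"
  shows "(A + a \<cdot>\<^sub>m 1\<^sub>m n)\<^sup>T = A + a \<cdot>\<^sub>m 1\<^sub>m n"
proof -
  have "(a \<cdot>\<^sub>m 1\<^sub>m n)\<^sup>T = a \<cdot>\<^sub>m 1\<^sub>m n" by (rule eq_matI) auto
  then show ?thesis using assms by (simp add: transpose_add)
qed

lemma adj_mat_one: "adj_mat (1\<^sub>m n :: 'a::comm_ring_1 mat) = 1\<^sub>m n"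
proof -
  have "adj_mat (1\<^sub>m n :: 'a mat) = 1\<^sub>m n * adj_mat (1\<^sub>m n)"
    using adj_mat(1)[of "1\<^sub>m n :: 'a mat" n] by simp
  also have "\<dots> = (1::'a) \<cdot>\<^sub>m 1\<^sub>m n"
    using adj_mat(2)[of "1\<^sub>m n :: 'a mat" n] by simp
  also have "\<dots> = 1\<^sub>m n"
    by (rule eq_matI) auto
  finally show ?thesis .
qed

lemma inverse_if_det_nonzero:
  fixes B :: "'a::field mat"
  assumes "B \<in> carrier_mat n n" and "det B \<noteq> 0"
  obtains E where "E \<in> carrier_mat n n" and "B * E = 1\<^sub>m n" and "E * B = 1\<^sub>m n"
  using det_non_zero_imp_unit[OF assms, of "()"] that
  unfolding Units_def ring_mat_def by auto

lemma char_matrix_uminus: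
  assumes "A \<in> carrier_mat n n"
  shows "char_matrix A (- a) = A + a \<cdot>\<^sub>m 1\<^sub>m n"
  using assms by (simp add: char_matrix_def)

lemma mat_of_cols_mult_transpose:
  assumes "u \<in> carrier_vec n" and "v \<in> carrier_vec n"
  shows "mat_of_cols n [u] * (mat_of_cols n [v])\<^sup>T = mat n n (\<lambda>(i, j). u $ i * v $ j)"
  by (rule eq_matI) (use assms in \<open>auto simp: mat_of_cols_index scalar_prod_def\<close>)

lemma mult_mat_of_cols_single:
  assumes "B \<in> carrier_mat n n" and "v \<in> carrier_vec n"
  shows "B * mat_of_cols n [v] = mat_of_cols n [B *\<^sub>v v]"
  by (rule eq_matI) (use assms in \<open>auto simp: mat_of_cols_index scalar_prod_def\<close>)

lemma dvd_det_if_eigenvector: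
  fixes N :: "'a::comm_ring_1 mat"
  assumes N: "N \<in> carrier_mat n n" and v: "v \<in> carrier_vec n" and Nv: "N *\<^sub>v v = p \<cdot>\<^sub>v v"
    and i: "i < n" and unit: "v $ i dvd 1"
  shows "p dvd det N"
proof -
  have "det N \<cdot>\<^sub>v v = (adj_mat N * N) *\<^sub>v v"
    using adj_mat[OF N] v by (simp add: smult_mat_mult_vec[of _ n n])
  also have "\<dots> = adj_mat N *\<^sub>v (N *\<^sub>v v)"
    by (rule assoc_mult_mat_vec) (use adj_mat[OF N] N v in auto)
  also have "\<dots> = p \<cdot>\<^sub>v (adj_mat N *\<^sub>v v)"
    using adj_mat[OF N] v by (simp add: Nv mult_mat_vec_smult)
  finally have "(det N \<cdot>\<^sub>v v) $ i = (p \<cdot>\<^sub>v (adj_mat N *\<^sub>v v)) $ i" by simp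
  then have "p dvd det N * v $ i"
    using i v adj_mat[OF N] by simp
  moreover obtain w where "1 = v $ i * w" using unit by (elim dvdE)
  then have "det N = det N * v $ i * w" by (metis mult.assoc mult_1_right)
  ultimately show ?thesis by (metis dvd_mult2)
qed

context comm_ring_hom
begin

lemma hom_scalar_prod:
  assumes "v \<in> carrier_vec n" and "w \<in> carrier_vec n"
  shows "hom (v \<bullet> w) = vec\<^sub>h v \<bullet> vec\<^sub>h w"
  using assms by (simp add: scalar_prod_def hom_sum hom_mult)

lemma vec_hom_add:
  assumes "v \<in> carrier_vec n" and "w \<in> carrier_vec n"
  shows "vec\<^sub>h (v + w) = vec\<^sub>h v + vec\<^sub>h w"
  by (rule eq_vecI) (use assms in \<open>auto simp: hom_add\<close>)

lemma mat_hom_adj_mat: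
  assumes A: "A \<in> carrier_mat n n"
  shows "mat\<^sub>h (adj_mat A) = adj_mat (mat\<^sub>h A)"
proof -
  have "mat\<^sub>h (mat_delete A i j) = mat_delete (mat\<^sub>h A) i j" if "i < n" "j < n" for i j
    by (rule eq_matI) (use A that in \<open>auto simp: mat_delete_def\<close>)
  then show ?thesis
    by (intro eq_matI)
      (use A in \<open>auto simp: adj_mat_def cofactor_def hom_mult hom_power hom_uminus simp flip: hom_det\<close>)
qed

lemma det_nonzero_if_mat_hom_eq_one:
  assumes "W \<in> carrier_mat n n" and "mat\<^sub>h W = 1\<^sub>m n"
  shows "det W \<noteq> 0"
proof
  assume "det W = 0"
  then have "det (mat\<^sub>h W) = 0" by simp
  then show False using assms(2) by simp
qed

lemma hom_scalar_prod_adj_mat: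
  assumes W: "W \<in> carrier_mat n n" and W1: "mat\<^sub>h W = 1\<^sub>m n"
    and x: "x \<in> carrier_vec n" and r: "r \<in> carrier_vec n"
  shows "hom (x \<bullet> (adj_mat W *\<^sub>v r)) = vec\<^sub>h x \<bullet> vec\<^sub>h r"
proof -
  have "vec\<^sub>h (adj_mat W *\<^sub>v r) = vec\<^sub>h r"
    using mult_mat_vec_hom[OF adj_mat(1)[OF W] r] mat_hom_adj_mat[OF W] W1 r
    by (simp add: adj_mat_one)
  then show ?thesis using hom_scalar_prod[OF x, of "adj_mat W *\<^sub>v r"] adj_mat(1)[OF W] r by simp
qed

end

section \<open>Determinants of rank-one updates\<close>

lemma det_bordered_eq_det_add:
  fixes W :: "'a::idom mat"
  assumes W: "W \<in> carrier_mat n n" and C: "C \<in> carrier_mat n 1" and R: "R \<in> carrier_mat 1 n"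
  shows "det (four_block_mat W C (- R) (1\<^sub>m 1)) = det (W + C * R)"
proof -
  define M where "M = four_block_mat W C (- R) (1\<^sub>m 1)"
  define L where "L = four_block_mat (1\<^sub>m n) (0\<^sub>m n 1) R (1\<^sub>m 1)"
  have M: "M \<in> carrier_mat (n + 1) (n + 1)" and L: "L \<in> carrier_mat (n + 1) (n + 1)"
    using W C R by (auto simp: M_def L_def)
  have "M * L = four_block_mat (W + C * R) C (0\<^sub>m 1 n) (1\<^sub>m 1)"
    unfolding M_def L_def
    by (subst mult_four_block_mat) (use W C R in \<open>auto intro!: cong_four_block_mat\<close>)
  then have "det M * det L = det (W + C * R)"
    using det_mult[OF M L] W C R by (simp add: det_four_block_mat_lower_left_zero[of _ n _ 1])
  moreover have "det L = 1"
    using R by (simp add: L_def det_four_block_mat_upper_right_zero[of _ n _ 1])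
  ultimately show ?thesis by (simp add: M_def)
qed

lemma det_bordered_eq_adj:
  fixes W :: "'a::idom mat"
  assumes W: "W \<in> carrier_mat n n" and C: "C \<in> carrier_mat n 1" and R: "R \<in> carrier_mat 1 n"
    and dW: "det W \<noteq> 0"
  shows "det (four_block_mat W C (- R) (1\<^sub>m 1)) = det W + (R * adj_mat W * C) $$ (0, 0)"
proof -
  define d where "d = det W"
  define M where "M = four_block_mat W C (- R) (1\<^sub>m 1)"
  \<comment> \<open>the adjugate analogue of block elimination with the inverse of W\<close>
  define L where "L = four_block_mat (adj_mat W) (0\<^sub>m n 1) (R * adj_mat W) (d \<cdot>\<^sub>m 1\<^sub>m 1)"
  note adj = adj_mat[OF W, folded d_def]
  have M: "M \<in> carrier_mat (n + 1) (n + 1)" and L: "L \<in> carrier_mat (n + 1) (n + 1)"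
    using W C R adj by (auto simp: M_def L_def)
  have "R * adj_mat W * W = R * (adj_mat W * W)"
    using R adj W by simp
  then have "L * M = four_block_mat (d \<cdot>\<^sub>m 1\<^sub>m n) (adj_mat W * C) (0\<^sub>m 1 n)
      (R * adj_mat W * C + d \<cdot>\<^sub>m 1\<^sub>m 1)"
    unfolding M_def L_def
    by (subst mult_four_block_mat) (use W C R adj in \<open>auto intro!: cong_four_block_mat\<close>)
  then have "det L * det M = d ^ n * (R * adj_mat W * C + d \<cdot>\<^sub>m 1\<^sub>m 1) $$ (0, 0)"
    using det_mult[OF L M] W C R adj
    by (simp add: det_four_block_mat_lower_left_zero[of _ n _ 1] det_single)
  moreover have "det L = d ^ n"
  proof -
    have "det L = det (adj_mat W) * d"
      using R adj by (simp add: L_def det_four_block_mat_upper_right_zero[of _ n _ 1] det_single)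
    also have "\<dots> = det (adj_mat W * W)" using det_mult[OF adj(1) W] by (simp add: d_def)
    also have "\<dots> = d ^ n" using adj by simp
    finally show ?thesis .
  qed
  ultimately show ?thesis
    using dW R C adj by (simp add: M_def d_def add.commute)
qed

lemma det_add_rank_one:
  fixes W :: "'a::idom mat"
  assumes W: "W \<in> carrier_mat n n" and u: "u \<in> carrier_vec n" and v: "v \<in> carrier_vec n"
    and dW: "det W \<noteq> 0"
  shows "det (W + mat n n (\<lambda>(i, j). u $ i * v $ j)) = det W + v \<bullet> (adj_mat W *\<^sub>v u)"
proof -
  define C where "C = mat_of_cols n [u]"
  define R where "R = (mat_of_cols n [v])\<^sup>T"
  have C: "C \<in> carrier_mat n 1" and R: "R \<in> carrier_mat 1 n" by (auto simp: C_def R_def)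
  have "R * adj_mat W * C = R * mat_of_cols n [adj_mat W *\<^sub>v u]"
    using assoc_mult_mat[OF R adj_mat(1)[OF W] C] mult_mat_of_cols_single[OF adj_mat(1)[OF W] u]
    by (simp add: C_def)
  then have "(R * adj_mat W * C) $$ (0, 0) = v \<bullet> (adj_mat W *\<^sub>v u)"
    using adj_mat[OF W] u v by (simp add: R_def mat_of_cols_index scalar_prod_def)
  then show ?thesis
    using det_bordered_eq_det_add[OF W C R] det_bordered_eq_adj[OF W C R dW]
    by (simp add: C_def R_def mat_of_cols_mult_transpose[OF u v])
qed

lemma det_sub_rank_one_factor:
  fixes W :: "'a::idom mat"
  assumes W: "W \<in> carrier_mat n n" and dW: "det W \<noteq> 0"
    and x: "x \<in> carrier_vec n" and r: "r \<in> carrier_vec n"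
    and Wx: "W *\<^sub>v x = x + s \<cdot>\<^sub>v r" and cx: "c * (x \<bullet> x) = 1"
  shows "det (W - c \<cdot>\<^sub>m mat n n (\<lambda>(i, j). x $ i * x $ j))
    = s * (c * (x \<bullet> (adj_mat W *\<^sub>v r)))"
proof -
  note adj = adj_mat[OF W]
  have "W - c \<cdot>\<^sub>m mat n n (\<lambda>(i, j). x $ i * x $ j)
      = W + mat n n (\<lambda>(i, j). (- c \<cdot>\<^sub>v x) $ i * x $ j)"
    by (rule eq_matI) (use W x in auto)
  then have "det (W - c \<cdot>\<^sub>m mat n n (\<lambda>(i, j). x $ i * x $ j))
      = det W - c * (x \<bullet> (adj_mat W *\<^sub>v x))"
    using det_add_rank_one[OF W _ x dW, of "- c \<cdot>\<^sub>v x"] adj x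
    by (simp add: mult_mat_vec_smult[of _ n n])
  moreover have "det W = c * (x \<bullet> (adj_mat W *\<^sub>v (W *\<^sub>v x)))"
  proof -
    have "adj_mat W *\<^sub>v (W *\<^sub>v x) = det W \<cdot>\<^sub>v x"
      using adj W x by (simp add: assoc_mult_mat_vec[symmetric, of _ n n] smult_mat_mult_vec[of _ n n])
    then show ?thesis using cx x by (simp add: ac_simps)
  qed
  moreover have "adj_mat W *\<^sub>v (W *\<^sub>v x)
      = adj_mat W *\<^sub>v x + s \<cdot>\<^sub>v (adj_mat W *\<^sub>v r)"
    using adj x r by (simp add: Wx mult_add_distrib_mat_vec[of _ n n] mult_mat_vec_smult[of _ n n])
  ultimately show ?thesis
    using adj x r by (simp add: scalar_prod_add_distrib[of _ n] algebra_simps)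
qed

section \<open>Positive semidefinite matrices\<close>

lemma psd_quadratic_form_eq_0_imp_kernel:
  fixes B :: "real mat"
  assumes B: "B \<in> carrier_mat n n" and sym: "B\<^sup>T = B" and psd: "psd n B"
    and v: "v \<in> carrier_vec n" and v0: "v \<bullet> (B *\<^sub>v v) = 0"
  shows "B *\<^sub>v v = 0\<^sub>v n"
proof (rule ccontr)
  define z where "z = B *\<^sub>v v"
  define b where "b = z \<bullet> (B *\<^sub>v z)"
  define t where "t = (z \<bullet> z) / (b + 1)"
  have z: "z \<in> carrier_vec n" using B v by (simp add: z_def)
  assume "B *\<^sub>v v \<noteq> 0\<^sub>v n"
  then have zz: "z \<bullet> z > 0" using conjugate_square_greater_0_vec[OF z] by (simp add: z_def)
  have b: "b \<ge> 0" using psd z by (simp add: psd_def b_def)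
  have t: "t > 0" and tb: "t * b < z \<bullet> z"
    using zz b by (auto simp: t_def field_simps)
  have vBz: "v \<bullet> (B *\<^sub>v z) = z \<bullet> z"
    using symmetric_mat_scalar_prod[OF B sym z v] by (simp add: z_def)
  \<comment> \<open>moving from v in the direction of -B v makes the quadratic form negative\<close>
  have "(v - t \<cdot>\<^sub>v z) \<bullet> (B *\<^sub>v (v - t \<cdot>\<^sub>v z)) = t * (t * b - 2 * (z \<bullet> z))"
    using B v z v0 vBz comm_scalar_prod[OF v z]
    by (simp add: z_def[symmetric] b_def[symmetric] mult_mat_vec_smult
        minus_scalar_prod_distrib scalar_prod_minus_distrib algebra_simps)
  also have "\<dots> < 0" using t tb zz by (simp add: mult_pos_neg)
  moreover have "v - t \<cdot>\<^sub>v z \<in> carrier_vec n" using v z by simp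
  ultimately show False using psd unfolding psd_def by fastforce
qed

lemma quadratic_form_inverse_pos:
  fixes B E :: "real mat"
  assumes B: "B \<in> carrier_mat n n" and sym: "B\<^sup>T = B" and psd: "psd n B"
    and E: "E \<in> carrier_mat n n" and BE: "B * E = 1\<^sub>m n"
    and x: "x \<in> carrier_vec n" "x \<noteq> 0\<^sub>v n"
  shows "x \<bullet> (E *\<^sub>v x) > 0"
proof -
  define y where "y = E *\<^sub>v x"
  have y: "y \<in> carrier_vec n" using E x by (simp add: y_def)
  have By: "B *\<^sub>v y = x"
    using B E x BE assoc_mult_mat_vec[OF B E x(1)] by (simp add: y_def)
  have "x \<bullet> (E *\<^sub>v x) = y \<bullet> (B *\<^sub>v y)"
    using comm_scalar_prod[OF x(1) y] By by (simp add: y_def)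
  moreover have "y \<bullet> (B *\<^sub>v y) \<noteq> 0"
    using psd_quadratic_form_eq_0_imp_kernel[OF B sym psd y] By x by auto
  moreover have "y \<bullet> (B *\<^sub>v y) \<ge> 0" using psd y by (simp add: psd_def)
  ultimately show ?thesis by simp
qed

lemma psd_shift_eigenvalue_nonneg:
  fixes A :: "real mat"
  assumes A: "A \<in> carrier_mat n n" and psd: "psd n (A + a \<cdot>\<^sub>m 1\<^sub>m n)" and ev: "eigenvalue A e"
  shows "0 \<le> e + a"
proof -
  obtain k where k: "k \<in> carrier_vec n" "k \<noteq> 0\<^sub>v n" "A *\<^sub>v k = e \<cdot>\<^sub>v k"
    using ev A unfolding eigenvalue_def eigenvector_def by auto
  have "(A + a \<cdot>\<^sub>m 1\<^sub>m n) *\<^sub>v k = (e + a) \<cdot>\<^sub>v k"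
    using A k by (simp add: add_mult_distrib_mat_vec[of _ n n] smult_mat_mult_vec[of _ n n] add_smult_distrib_vec)
  moreover have "0 \<le> k \<bullet> ((A + a \<cdot>\<^sub>m 1\<^sub>m n) *\<^sub>v k)" using psd k by (simp add: psd_def)
  ultimately have "0 \<le> (e + a) * (k \<bullet> k)" using k by simp
  moreover have "k \<bullet> k > 0" using conjugate_square_greater_0_vec[OF k(1)] k(2) by simp
  ultimately show ?thesis by (simp add: zero_le_mult_iff)
qed

section \<open>The characteristic polynomial of M\<close>

lemma outer_eq_mat_of_cols_mult_transpose:
  assumes "x \<in> carrier_vec n"
  shows "outer n x = mat_of_cols n [x] * (mat_of_cols n [x])\<^sup>T"
  using mat_of_cols_mult_transpose[OF assms assms] by (simp add: outer_def)

lemma outer_uminus: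
  assumes "x \<in> carrier_vec n"
  shows "outer n (- x) = outer n x"
  by (rule eq_matI) (use assms in \<open>auto simp: outer_def\<close>)

lemma outer_mult_vec:
  assumes "x \<in> carrier_vec n" and "v \<in> carrier_vec n"
  shows "outer n x *\<^sub>v v = (x \<bullet> v) \<cdot>\<^sub>v x"
  by (rule eq_vecI) (use assms in \<open>auto simp: outer_def scalar_prod_def sum_distrib_left ac_simps\<close>)

lemma symmetric_congruence_outer:
  assumes B: "B \<in> carrier_mat n n" and sym: "B\<^sup>T = B" and x: "x \<in> carrier_vec n"
  shows "B * (c \<cdot>\<^sub>m outer n x) * B = c \<cdot>\<^sub>m outer n (B *\<^sub>v x)"
proof -
  define C where "C = mat_of_cols n [x]"
  have C: "C \<in> carrier_mat n 1" and CT: "C\<^sup>T \<in> carrier_mat 1 n"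
    using mat_of_cols_carrier(1)[of n "[x]"] by (simp_all add: C_def)
  have BC: "B * C \<in> carrier_mat n 1" using B C by simp
  have O: "outer n x \<in> carrier_mat n n" by (simp add: outer_def)
  have "B * outer n x * B = B * (C * C\<^sup>T) * B"
    unfolding C_def outer_eq_mat_of_cols_mult_transpose[OF x] ..
  also have "\<dots> = (B * C) * C\<^sup>T * B"
    unfolding assoc_mult_mat[OF B C CT] ..
  also have "\<dots> = (B * C) * (B * C)\<^sup>T"
    unfolding assoc_mult_mat[OF BC CT B] transpose_mult[OF B C] sym ..
  also have "\<dots> = outer n (B *\<^sub>v x)"
    unfolding C_def mult_mat_of_cols_single[OF B x]
    by (rule outer_eq_mat_of_cols_mult_transpose[symmetric]) (use B x in simp)
  finally show ?thesis
    unfolding mult_smult_distrib[OF B O] mult_smult_assoc_mat[OF mult_carrier_mat[OF B O] B] by simp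
qed

lemma char_poly_matrix_uminus_shift:
  assumes "A \<in> carrier_mat n n"
  shows "char_poly_matrix (- A) = const_mat (A + a \<cdot>\<^sub>m 1\<^sub>m n) + [:- a, 1:] \<cdot>\<^sub>m 1\<^sub>m n"
  by (rule eq_matI) (use assms in \<open>auto simp: char_poly_matrix_def\<close>)

lemma char_poly_four_block_uminus:
  fixes A G :: "'a::idom mat"
  assumes A: "A \<in> carrier_mat n n" and G: "G \<in> carrier_mat n n"
  shows "char_poly (four_block_mat (- A) G (1\<^sub>m n) (- A))
    = det (char_poly_matrix (- A) * char_poly_matrix (- A) - const_mat G)"
proof -
  define T where "T = char_poly_matrix (- A)"
  have T: "T \<in> carrier_mat n n" using A by (simp add: T_def)
  have "char_poly_matrix (four_block_mat (- A) G (1\<^sub>m n) (- A))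
      = four_block_mat T (- const_mat G) (- 1\<^sub>m n) T"
  proof -
    have "[:- 1:] = (- 1 :: 'a poly)" by (metis minus_pCons minus_zero pCons_one)
    then show ?thesis
      by (intro eq_matI) (use A G in \<open>auto simp: T_def char_poly_matrix_def\<close>)
  qed
  then have "char_poly (four_block_mat (- A) G (1\<^sub>m n) (- A))
      = det (T * T - (- const_mat G) * (- 1\<^sub>m n))"
    using det_four_block_mat[of T n "- const_mat G" "- 1\<^sub>m n" T] T G by (simp add: char_poly_def)
  also have "(- const_mat G) * (- 1\<^sub>m n) = const_mat G" using G by simp
  finally show ?thesis by (simp add: T_def)
qed

lemma Mmat_carrier:
  assumes "A \<in> carrier_mat n n"
  shows "Mmat n A g \<Delta> \<in> carrier_mat (n + n) (n + n)"
  using assms by (simp add: Mmat_def outer_def)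

lemma char_poly_Mmat:
  assumes "A \<in> carrier_mat n n"
  shows "char_poly (Mmat n A g \<Delta>)
    = det (char_poly_matrix (- A) * char_poly_matrix (- A) - const_mat ((1 / \<Delta>\<^sup>2) \<cdot>\<^sub>m outer n g))"
  using char_poly_four_block_uminus[OF assms] by (simp add: Mmat_def outer_def)

section \<open>The hard case\<close>

lemma square_dvd_det_if_common_null_vector:
  fixes A G :: "'a::field mat"
  assumes A: "A \<in> carrier_mat n n" and G: "G \<in> carrier_mat n n"
    and k: "k \<in> carrier_vec n" "k \<noteq> 0\<^sub>v n"
    and Ak: "(A + a \<cdot>\<^sub>m 1\<^sub>m n) *\<^sub>v k = 0\<^sub>v n" and Gk: "G *\<^sub>v k = 0\<^sub>v n"
  shows "[:- a, 1:] ^ 2 dvd det (char_poly_matrix (- A) * char_poly_matrix (- A) - const_mat G)"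
proof -
  define T where "T = char_poly_matrix (- A)"
  define S where "S = [:- a, 1:]"
  define kp where "kp = const_vec k"
  have T: "T \<in> carrier_mat n n" and kp: "kp \<in> carrier_vec n" using A k by (auto simp: T_def kp_def)
  have "const_mat (A + a \<cdot>\<^sub>m 1\<^sub>m n) *\<^sub>v kp = 0\<^sub>v n"
    using const_poly.mult_mat_vec_hom[of "A + a \<cdot>\<^sub>m 1\<^sub>m n" n n k] A k
    by (simp add: kp_def Ak const_poly.vec_hom_zero)
  then have Tk: "T *\<^sub>v kp = S \<cdot>\<^sub>v kp"
    using A kp by (simp add: T_def S_def char_poly_matrix_uminus_shift[OF A, of a]
        add_mult_distrib_mat_vec[of _ n n] smult_mat_mult_vec[of _ n n])
  have "const_mat G *\<^sub>v kp = 0\<^sub>v n"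
    using const_poly.mult_mat_vec_hom[OF G k(1)] by (simp add: kp_def Gk const_poly.vec_hom_zero)
  then have "(T * T - const_mat G) *\<^sub>v kp = S ^ 2 \<cdot>\<^sub>v kp"
    using T G kp Tk by (simp add: minus_mult_distrib_mat_vec[of _ n n] mult_mat_vec_smult[of _ n n]
        smult_smult_assoc power2_eq_square)
  moreover obtain j where "j < n" "k $ j \<noteq> 0" using k by (auto simp: vec_eq_iff)
  moreover have "T * T - const_mat G \<in> carrier_mat n n" using G by (simp add: minus_carrier_mat)
  ultimately show ?thesis
    using dvd_det_if_eigenvector[of "T * T - const_mat G" n kp "S ^ 2" j] kp
    by (simp add: T_def S_def kp_def is_unit_const_poly_iff)
qed

lemma not_simple_eigenvalue_Mmat_if_hard_case:
  fixes A :: "real mat"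
  assumes A: "A \<in> carrier_mat n n" and sym: "A\<^sup>T = A" and x: "x \<in> carrier_vec n"
    and kkt: "(A + lam \<cdot>\<^sub>m 1\<^sub>m n) *\<^sub>v x = - g" and hard: "eigenvalue A (- lam)"
  shows "\<not> simple_eigenvalue (Mmat n A g \<Delta>) lam"
proof -
  define B where "B = A + lam \<cdot>\<^sub>m 1\<^sub>m n"
  have B: "B \<in> carrier_mat n n" using A by (simp add: B_def)
  obtain k where k: "k \<in> carrier_vec n" "k \<noteq> 0\<^sub>v n" "B *\<^sub>v k = 0\<^sub>v n"
    using hard unfolding eigenvalue_char_matrix[OF A] char_matrix_uminus[OF A] B_def by blast
  have g: "g = - (B *\<^sub>v x)" using kkt by (simp add: B_def)
  then have gc: "g \<in> carrier_vec n" using B x by simp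
  have "(B *\<^sub>v x) \<bullet> k = 0"
    using symmetric_mat_scalar_prod[OF B transpose_add_smult_one[OF A sym, of lam, folded B_def] k(1) x]
      k(3) x
    by simp
  then have "g \<bullet> k = 0" using g B k(1) by simp
  then have "outer n g *\<^sub>v k = 0\<^sub>v n" using outer_mult_vec[OF gc k(1)] gc by (intro eq_vecI) auto
  moreover have "((1 / \<Delta>\<^sup>2) \<cdot>\<^sub>m outer n g) *\<^sub>v k
      = (1 / \<Delta>\<^sup>2) \<cdot>\<^sub>v (outer n g *\<^sub>v k)"
    by (rule smult_mat_mult_vec) (use k(1) in \<open>auto simp: outer_def\<close>)
  ultimately have "((1 / \<Delta>\<^sup>2) \<cdot>\<^sub>m outer n g) *\<^sub>v k = 0\<^sub>v n"
    by (intro eq_vecI) auto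
  moreover have "(1 / \<Delta>\<^sup>2) \<cdot>\<^sub>m outer n g \<in> carrier_mat n n" by (simp add: outer_def)
  ultimately have "[:- lam, 1:] ^ 2 dvd char_poly (Mmat n A g \<Delta>)"
    using square_dvd_det_if_common_null_vector[OF A _ k(1,2) k(3)[unfolded B_def]]
    by (simp add: char_poly_Mmat[OF A])
  moreover have "char_poly (Mmat n A g \<Delta>) \<noteq> 0"
    using degree_monic_char_poly[OF Mmat_carrier[OF A, of g \<Delta>]] by (metis coeff_0 zero_neq_one)
  ultimately have "2 \<le> order lam (char_poly (Mmat n A g \<Delta>))"
    using order_divides[of lam 2 "char_poly (Mmat n A g \<Delta>)"] by blast
  then show ?thesis by (simp add: simple_eigenvalue_def)
qed

section \<open>The easy case\<close>

lemma shift_eq_mult_shifted_inverse: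
  fixes B E :: "'a::comm_ring_1 mat"
  assumes B: "B \<in> carrier_mat n n" and E: "E \<in> carrier_mat n n"
    and BE: "B * E = 1\<^sub>m n" and EB: "E * B = 1\<^sub>m n"
  shows "const_mat B + s \<cdot>\<^sub>m 1\<^sub>m n = const_mat B * (1\<^sub>m n + s \<cdot>\<^sub>m const_mat E)"
    and "const_mat B + s \<cdot>\<^sub>m 1\<^sub>m n = (1\<^sub>m n + s \<cdot>\<^sub>m const_mat E) * const_mat B"
proof -
  have Bc: "const_mat B \<in> carrier_mat n n" and Ec: "const_mat E \<in> carrier_mat n n"
    using B E by auto
  have BEc: "const_mat B * const_mat E = 1\<^sub>m n" and EBc: "const_mat E * const_mat B = 1\<^sub>m n"
    using const_poly.mat_hom_mult[OF B E] const_poly.mat_hom_mult[OF E B] BE EB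
    by (simp_all add: const_poly.mat_hom_one)
  have "const_mat B * (1\<^sub>m n + s \<cdot>\<^sub>m const_mat E)
      = const_mat B * 1\<^sub>m n + const_mat B * (s \<cdot>\<^sub>m const_mat E)"
    by (rule mult_add_distrib_mat) (use Bc Ec in auto)
  then show "const_mat B + s \<cdot>\<^sub>m 1\<^sub>m n = const_mat B * (1\<^sub>m n + s \<cdot>\<^sub>m const_mat E)"
    using Bc by (simp add: mult_smult_distrib[OF Bc Ec] BEc)
  have "(1\<^sub>m n + s \<cdot>\<^sub>m const_mat E) * const_mat B
      = 1\<^sub>m n * const_mat B + (s \<cdot>\<^sub>m const_mat E) * const_mat B"
    by (rule add_mult_distrib_mat) (use Bc Ec in auto)
  then show "const_mat B + s \<cdot>\<^sub>m 1\<^sub>m n = (1\<^sub>m n + s \<cdot>\<^sub>m const_mat E) * const_mat B"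
    using Bc by (simp add: mult_smult_assoc_mat[OF Ec Bc] EBc)
qed

lemma shifted_square_minus_outer_congruence:
  fixes B E :: "real mat" and s :: "real poly"
  assumes B: "B \<in> carrier_mat n n" and E: "E \<in> carrier_mat n n"
    and BE: "B * E = 1\<^sub>m n" and EB: "E * B = 1\<^sub>m n" and sym: "B\<^sup>T = B"
    and x: "x \<in> carrier_vec n"
  defines "T \<equiv> const_mat B + s \<cdot>\<^sub>m 1\<^sub>m n"
    and "U \<equiv> 1\<^sub>m n + s \<cdot>\<^sub>m const_mat E"
  shows "T * T - const_mat (c \<cdot>\<^sub>m outer n (B *\<^sub>v x))
    = const_mat B * (U * U - const_mat (c \<cdot>\<^sub>m outer n x)) * const_mat B"
proof -
  define X where "X = const_mat (c \<cdot>\<^sub>m outer n x)"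
  have Bc: "const_mat B \<in> carrier_mat n n" and U: "U \<in> carrier_mat n n"
    and X: "X \<in> carrier_mat n n" and O: "c \<cdot>\<^sub>m outer n x \<in> carrier_mat n n"
    using B E by (auto simp: U_def X_def outer_def)
  have UU: "U * U \<in> carrier_mat n n" and UB: "U * const_mat B \<in> carrier_mat n n"
    using U Bc by auto
  have "const_mat (c \<cdot>\<^sub>m outer n (B *\<^sub>v x)) = const_mat B * X * const_mat B"
    unfolding symmetric_congruence_outer[OF B sym x, symmetric] X_def
    by (simp add: const_poly.mat_hom_mult[OF mult_carrier_mat[OF B O] B] const_poly.mat_hom_mult[OF B O])
  moreover have "T * T = const_mat B * (U * U) * const_mat B"
  proof -
    have "T * T = const_mat B * U * (U * const_mat B)"
      using shift_eq_mult_shifted_inverse[OF B E BE EB, of s] by (simp flip: T_def U_def)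
    also have "\<dots> = const_mat B * (U * (U * const_mat B))" by (rule assoc_mult_mat[OF Bc U UB])
    also have "\<dots> = const_mat B * (U * U) * const_mat B"
      by (simp only: assoc_mult_mat[OF U U Bc, symmetric] assoc_mult_mat[OF Bc UU Bc])
    finally show ?thesis .
  qed
  ultimately have "T * T - const_mat (c \<cdot>\<^sub>m outer n (B *\<^sub>v x))
      = const_mat B * (U * U) * const_mat B - const_mat B * X * const_mat B"
    by simp
  also have "\<dots> = const_mat B * (U * U - X) * const_mat B"
    unfolding mult_minus_distrib_mat[OF Bc UU X]
      minus_mult_distrib_mat[OF mult_carrier_mat[OF Bc UU] mult_carrier_mat[OF Bc X] Bc] ..
  finally show ?thesis by (simp only: X_def)
qed

lemma square_identity_plus_smult_mult_vec:
  fixes E :: "'a::comm_ring_1 mat" and s :: 'a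
  assumes E: "E \<in> carrier_mat n n" and y: "y \<in> carrier_vec n"
  defines "U \<equiv> 1\<^sub>m n + s \<cdot>\<^sub>m E"
  shows "(U * U) *\<^sub>v y = y + s \<cdot>\<^sub>v (E *\<^sub>v y + E *\<^sub>v (U *\<^sub>v y))"
proof -
  have U: "U \<in> carrier_mat n n" using E by (simp add: U_def)
  have Uy: "U *\<^sub>v z = z + s \<cdot>\<^sub>v (E *\<^sub>v z)" if "z \<in> carrier_vec n" for z
    using E that by (simp add: U_def add_mult_distrib_mat_vec[of _ n n] smult_mat_mult_vec[of _ n n])
  have "(U * U) *\<^sub>v y = U *\<^sub>v y + s \<cdot>\<^sub>v (E *\<^sub>v (U *\<^sub>v y))"
    using U y Uy[of "U *\<^sub>v y"] by simp
  also have "\<dots> = y + s \<cdot>\<^sub>v (E *\<^sub>v y + E *\<^sub>v (U *\<^sub>v y))"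
    using E U y by (simp add: Uy smult_add_distrib_vec[of _ n])
  finally show ?thesis .
qed

lemma det_shifted_square_minus_outer:
  fixes E :: "real mat"
  assumes E: "E \<in> carrier_mat n n" and x: "x \<in> carrier_vec n"
    and cx: "c * (x \<bullet> x) = 1" and root: "poly s t = 0"
  defines "U \<equiv> 1\<^sub>m n + s \<cdot>\<^sub>m const_mat E"
  obtains q where "det (U * U - const_mat (c \<cdot>\<^sub>m outer n x)) = s * q"
    and "poly q t = 2 * c * (x \<bullet> (E *\<^sub>v x))"
proof -
  define xp where "xp = const_vec x"
  define r where "r = const_mat E *\<^sub>v xp + const_mat E *\<^sub>v (U *\<^sub>v xp)"
  define W where "W = U * U"
  \<comment> \<open>a fresh interpretation: the library's poly_hom lacks the matrix lemmas of semiring_hom\<close>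
  define ev where "ev = (\<lambda>p::real poly. poly p t)"
  interpret ev: comm_ring_hom ev
    unfolding ev_def by (rule poly_hom.comm_ring_hom_axioms)
  have U: "U \<in> carrier_mat n n" and W: "W \<in> carrier_mat n n" and xp: "xp \<in> carrier_vec n"
    using E x by (auto simp: U_def W_def xp_def)
  have r: "r \<in> carrier_vec n" using E U xp by (simp add: r_def)
  have ev_U: "map_mat ev U = 1\<^sub>m n"
    by (rule eq_matI) (use E root in \<open>auto simp: U_def ev_def\<close>)
  then have ev_W: "map_mat ev W = 1\<^sub>m n"
    using ev.mat_hom_mult[OF U U] by (simp add: W_def)
  have ev_x: "map_vec ev xp = x" by (rule eq_vecI) (auto simp: xp_def ev_def)
  have ev_E: "map_mat ev (const_mat E) = E" by (rule eq_matI) (auto simp: ev_def)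
  have Wx: "W *\<^sub>v xp = xp + s \<cdot>\<^sub>v r"
    unfolding W_def U_def r_def by (rule square_identity_plus_smult_mult_vec) (use E xp in auto)
  have "const_mat (c \<cdot>\<^sub>m outer n x) = [:c:] \<cdot>\<^sub>m mat n n (\<lambda>(i, j). xp $ i * xp $ j)"
    by (rule eq_matI) (use x in \<open>auto simp: outer_def xp_def\<close>)
  moreover have "[:c:] * (xp \<bullet> xp) = [:c * (x \<bullet> x):]"
    by (metis const_poly.hom_mult const_poly.hom_scalar_prod[OF x x] xp_def)
  ultimately have "det (W - const_mat (c \<cdot>\<^sub>m outer n x))
      = s * ([:c:] * (xp \<bullet> (adj_mat W *\<^sub>v r)))"
    using det_sub_rank_one_factor[OF W ev.det_nonzero_if_mat_hom_eq_one[OF W ev_W] xp r Wx] cx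
    by simp
  moreover have "map_vec ev r = E *\<^sub>v x + E *\<^sub>v x"
  proof -
    have "map_vec ev (U *\<^sub>v xp) = x"
      using ev.mult_mat_vec_hom[OF U xp] ev_U ev_x x by simp
    moreover have "map_vec ev r
        = map_vec ev (const_mat E *\<^sub>v xp) + map_vec ev (const_mat E *\<^sub>v (U *\<^sub>v xp))"
      unfolding r_def by (rule ev.vec_hom_add[of _ n]) (use E U xp in auto)
    ultimately show ?thesis
      using ev.mult_mat_vec_hom[of "const_mat E" n n] E U xp ev_E ev_x by simp
  qed
  then have "ev (xp \<bullet> (adj_mat W *\<^sub>v r)) = 2 * (x \<bullet> (E *\<^sub>v x))"
    using ev.hom_scalar_prod_adj_mat[OF W ev_W xp r] ev_x E x
    by (simp add: scalar_prod_add_distrib[of _ n])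
  ultimately show ?thesis
    using that[of "[:c:] * (xp \<bullet> (adj_mat W *\<^sub>v r))"] by (simp add: W_def ev_def)
qed

lemma char_poly_Mmat_easy_case_factor:
  fixes A E :: "real mat"
  assumes A: "A \<in> carrier_mat n n" and sym: "A\<^sup>T = A" and E: "E \<in> carrier_mat n n"
    and BE: "(A + lam \<cdot>\<^sub>m 1\<^sub>m n) * E = 1\<^sub>m n" and EB: "E * (A + lam \<cdot>\<^sub>m 1\<^sub>m n) = 1\<^sub>m n"
    and x: "x \<in> carrier_vec n" and xx: "x \<bullet> x = \<Delta>\<^sup>2" and \<Delta>: "\<Delta> \<noteq> 0"
    and kkt: "(A + lam \<cdot>\<^sub>m 1\<^sub>m n) *\<^sub>v x = - g"
  obtains q where "char_poly (Mmat n A g \<Delta>) = [:- lam, 1:] * q"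
    and "poly q lam = 2 / \<Delta>\<^sup>2 * det (A + lam \<cdot>\<^sub>m 1\<^sub>m n) ^ 2 * (x \<bullet> (E *\<^sub>v x))"
proof -
  define B where "B = A + lam \<cdot>\<^sub>m 1\<^sub>m n"
  define S where "S = [:- lam, 1:]"
  define U where "U = 1\<^sub>m n + S \<cdot>\<^sub>m const_mat E"
  define X where "X = const_mat ((1 / \<Delta>\<^sup>2) \<cdot>\<^sub>m outer n x)"
  have B: "B \<in> carrier_mat n n" using A by (simp add: B_def)
  have "g = - (B *\<^sub>v x)" using kkt by (simp add: B_def)
  then have outer_g: "outer n g = outer n (B *\<^sub>v x)" using outer_uminus[of "B *\<^sub>v x" n] B x by simp
  have T: "char_poly_matrix (- A) = const_mat B + S \<cdot>\<^sub>m 1\<^sub>m n"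
    unfolding B_def S_def by (rule char_poly_matrix_uminus_shift[OF A])
  have "char_poly (Mmat n A g \<Delta>) = det (const_mat B * (U * U - X) * const_mat B)"
    unfolding char_poly_Mmat[OF A] T outer_g U_def X_def
    using shifted_square_minus_outer_congruence[OF B E BE[folded B_def] EB[folded B_def]
        transpose_add_smult_one[OF A sym, of lam, folded B_def] x]
    by (rule arg_cong)
  also have "\<dots> = [:det B:] ^ 2 * det (U * U - X)"
  proof -
    have K: "U * U - X \<in> carrier_mat n n" and Bc: "const_mat B \<in> carrier_mat n n"
      using B E by (auto simp: U_def X_def outer_def minus_carrier_mat)
    show ?thesis
      using det_mult[OF mult_carrier_mat[OF Bc K] Bc] det_mult[OF Bc K] by (simp add: power2_eq_square)
  qed
  finally have char: "char_poly (Mmat n A g \<Delta>) = [:det B:] ^ 2 * det (U * U - X)" .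
  have "1 / \<Delta>\<^sup>2 * (x \<bullet> x) = 1" using xx \<Delta> by simp
  moreover have "poly S lam = 0" by (simp add: S_def)
  ultimately obtain q where q: "det (U * U - X) = S * q"
    and q_lam: "poly q lam = 2 * (1 / \<Delta>\<^sup>2) * (x \<bullet> (E *\<^sub>v x))"
    by (rule det_shifted_square_minus_outer[OF E x, where c = "1 / \<Delta>\<^sup>2" and s = S and t = lam,
          folded U_def X_def])
  show ?thesis
  proof (rule that)
    show "char_poly (Mmat n A g \<Delta>) = [:- lam, 1:] * ([:det B:] ^ 2 * q)"
      unfolding char q S_def by (rule mult.left_commute)
    show "poly ([:det B:] ^ 2 * q) lam
        = 2 / \<Delta>\<^sup>2 * det (A + lam \<cdot>\<^sub>m 1\<^sub>m n) ^ 2 * (x \<bullet> (E *\<^sub>v x))"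
      using q_lam by (simp add: B_def)
  qed
qed

lemma order_eq_1_if_simple_factor:
  assumes "p = [:- a, 1:] * q" and "poly q a \<noteq> 0"
  shows "order a p = 1"
proof -
  have "q \<noteq> 0" using assms(2) by auto
  then have "order a p = order a [:- a, 1:] + order a q"
    unfolding assms(1) by (intro order_mult) (metis mult_eq_0_iff pCons_eq_0_iff one_neq_zero)
  then show ?thesis using assms(2) order_power_n_n[of a 1] by (simp add: order_0I)
qed

lemma simple_eigenvalue_Mmat_if_easy_case:
  fixes A :: "real mat"
  assumes A: "A \<in> carrier_mat n n" and sym: "A\<^sup>T = A" and \<Delta>: "\<Delta> \<noteq> 0"
    and x: "x \<in> carrier_vec n" and xx: "x \<bullet> x = \<Delta>\<^sup>2"
    and kkt: "(A + lam \<cdot>\<^sub>m 1\<^sub>m n) *\<^sub>v x = - g" and psd: "psd n (A + lam \<cdot>\<^sub>m 1\<^sub>m n)"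
    and easy: "\<not> eigenvalue A (- lam)"
  shows "simple_eigenvalue (Mmat n A g \<Delta>) lam"
proof -
  define B where "B = A + lam \<cdot>\<^sub>m 1\<^sub>m n"
  have B: "B \<in> carrier_mat n n" using A by (simp add: B_def)
  have dB: "det B \<noteq> 0"
    using easy eigenvalue_det[OF A, of "- lam"] by (simp add: B_def char_matrix_uminus[OF A])
  then obtain E where E: "E \<in> carrier_mat n n" "B * E = 1\<^sub>m n" "E * B = 1\<^sub>m n"
    using inverse_if_det_nonzero[OF B] by blast
  obtain q where char: "char_poly (Mmat n A g \<Delta>) = [:- lam, 1:] * q"
    and q: "poly q lam = 2 / \<Delta>\<^sup>2 * det B ^ 2 * (x \<bullet> (E *\<^sub>v x))"
    using char_poly_Mmat_easy_case_factor[OF A sym E(1) E(2,3)[unfolded B_def] x xx \<Delta> kkt]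
    by (auto simp: B_def)
  have "x \<noteq> 0\<^sub>v n" using xx \<Delta> x by auto
  then have "x \<bullet> (E *\<^sub>v x) > 0"
    using quadratic_form_inverse_pos[OF B transpose_add_smult_one[OF A sym, of lam, folded B_def]
        psd[folded B_def] E(1,2)] x
    by simp
  then have "poly q lam \<noteq> 0" using q \<Delta> dB by simp
  then have "order lam (char_poly (Mmat n A g \<Delta>)) = 1" by (rule order_eq_1_if_simple_factor[OF char])
  moreover have "eigenvalue (Mmat n A g \<Delta>) lam"
    using eigenvalue_root_char_poly[OF Mmat_carrier[OF A]] char by simp
  ultimately show ?thesis by (simp add: simple_eigenvalue_def)
qed

theorem theorem4p2:
  fixes n :: nat and A :: "real mat" and g x_opt :: "real vec"
    and \<alpha> \<Delta> lam :: real
  assumes A: "A \<in> carrier_mat n n" and sym: "A\<^sup>T = A"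
    and alpha_ev: "eigenvalue A \<alpha>"
    and alpha_min: "\<forall>a. eigenvalue A a \<longrightarrow> \<alpha> \<le> a"
    and g: "g \<in> carrier_vec n" and g_nz: "g \<noteq> 0\<^sub>v n"
    and Delta: "\<Delta> > 0"
    and x: "x_opt \<in> carrier_vec n" and x_feas: "vnorm x_opt \<le> \<Delta>"
    and x_min: "\<forall>y \<in> carrier_vec n. vnorm y \<le> \<Delta> \<longrightarrow> trs_obj A g x_opt \<le> trs_obj A g y"
    and lam_nonneg: "lam \<ge> 0"
    and kkt1: "(A + lam \<cdot>\<^sub>m 1\<^sub>m n) *\<^sub>v x_opt = - g"
    and kkt2: "lam * (\<Delta> - vnorm x_opt) = 0"
    and kkt3: "psd n (A + lam \<cdot>\<^sub>m 1\<^sub>m n)"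
    and bd: "vnorm x_opt = \<Delta>"
  shows "lam > - \<alpha> \<longleftrightarrow> simple_eigenvalue (Mmat n A g \<Delta>) lam"
proof -
  have xx: "x_opt \<bullet> x_opt = \<Delta>\<^sup>2"
    using bd conjugate_square_ge_0_vec[of x_opt] by (metis vnorm_def real_sqrt_pow2 vec_conjugate_real)
  have lam_ge: "- \<alpha> \<le> lam" using psd_shift_eigenvalue_nonneg[OF A kkt3 alpha_ev] by simp
  show ?thesis
  proof
    assume "lam > - \<alpha>"
    then have "\<not> eigenvalue A (- lam)" using alpha_min by force
    then show "simple_eigenvalue (Mmat n A g \<Delta>) lam"
      using simple_eigenvalue_Mmat_if_easy_case[OF A sym _ x xx kkt1 kkt3] Delta by simp
  next
    assume "simple_eigenvalue (Mmat n A g \<Delta>) lam"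
    then have "\<not> eigenvalue A (- lam)"
      using not_simple_eigenvalue_Mmat_if_hard_case[OF A sym x kkt1] by blast
    then show "lam > - \<alpha>" using alpha_ev lam_ge by (metis minus_minus order_le_less)
  qed
qed

end
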